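(* Correctness and invariance to $\alpha$-transformation on a triad are logically independent properties of weighting methods: there exists a weighting method (the Eigenvector Method) satisfying correctness but not invariance to $\alpha$-transformation on a triad, and there exists a weighting method (the flat method $f_i(\mathbf{A}) = 1/n$ for all $i$) satisfying invariance to $\alpha$-transformation on a triad but not correctness.
   Context: A pairwise comparison matrix of size $n$ is a matrix $\mathbf{A} = [a_{i,j}]$ with positive entries and $a_{j,i} = 1/a_{i,j}$ for all $i,j$; $\mathcal{A}^{n\times n}$ is the set of these; $\mathbf{A}$ is consistent if $a_{i,k} = a_{i,j}a_{j,k}$ for all $i,j,k$. A weighting method is a function $f$ from $\mathcal{A}^{n\times n}$ to vectors with positive entries summing to 1. Correctness: for every consistent $\mathbf{A}$, $f_i(\mathbf{A})/f_j(\mathbf{A}) = a_{i,j}$ for all $i,j$. An $\alpha$-transformation on the triad $(i,j,k)$ (three distinct indices), with $\alpha>0$, maps $\mathbf{A}$ to $\hat{\mathbf{A}}$ with $\hat a_{i,j} = \alpha a_{i,j}$, $\hat a_{j,i} = a_{j,i}/\alpha$, $\hat a_{j,k} = \alpha a_{j,k}$, $\hat a_{k,j} = a_{k,j}/\alpha$, $\hat a_{k,i} = \alpha a_{k,i}$, $\hat a_{i,k} = a_{i,k}/\alpha$, all other entries unchanged; invariance means $f(\mathbf{A}) = f(\hat{\mathbf{A}})$ whenever $\hat{\mathbf{A}}$ arises from $\mathbf{A}$ by such a transformation. The Eigenvector Method assigns to $\mathbf{A}$ the vector $\mathbf{w}$ with positive entries, $\sum_i w_i = 1$, and $\mathbf{A}\mathbf{w}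 = \lambda_{\max}\mathbf{w}$, where $\lambda_{\max}$ is the Perron eigenvalue of $\mathbf{A}$. *)

theory Defs
  imports "HOL-Analysis.Analysis"
begin

definition pcm :: "real^'n^'n \<Rightarrow> bool" where
  "pcm A \<longleftrightarrow> (\<forall>i j. A$i$j > 0) \<and> (\<forall>i j. A$j$i = 1 / A$i$j)"

definition consistent :: "real^'n^'n \<Rightarrow> bool" where
  "consistent A \<longleftrightarrow> (\<forall>i j k. A$i$k = A$i$j * A$j$k)"

definition weighting_method :: "(real^'n^'n \<Rightarrow> real^'n) \<Rightarrow> bool" where
  "weighting_method f \<longleftrightarrow>
     (\<forall>A. pcm A \<longrightarrow> (\<forall>i. f A $ i > 0) \<and> (\<Sum>i\<in>UNIV. f A $ i) = 1)"

definition correctness :: "(real^'n^'n \<Rightarrow> real^'n) \<Rightarrow> bool" where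
  "correctness f \<longleftrightarrow>
     (\<forall>A. pcm A \<and> consistent A \<longrightarrow> (\<forall>i j. f A $ i / f A $ j = A$i$j))"

definition alpha_transform :: "real \<Rightarrow> 'n \<Rightarrow> 'n \<Rightarrow> 'n \<Rightarrow> real^'n^'n \<Rightarrow> real^'n^'n" where
  "alpha_transform \<alpha> i j k A =
     (\<chi> p q. if (p, q) = (i, j) \<or> (p, q) = (j, k) \<or> (p, q) = (k, i) then \<alpha> * A$p$q
             else if (p, q) = (j, i) \<or> (p, q) = (k, j) \<or> (p, q) = (i, k) then A$p$q / \<alpha>
             else A$p$q)"

definition invariant_alpha_triad :: "(real^'n^'n \<Rightarrow> real^'n) \<Rightarrow> bool" where
  "invariant_alpha_triad f \<longleftrightarrow>
     (\<forall>A \<alpha> i j k. pcm A \<and> \<alpha> > 0 \<and> i \<noteq> j \<and> j \<noteq> k \<and> i \<noteq> k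
        \<longrightarrow> f A = f (alpha_transform \<alpha> i j k A))"

text \<open>Perron eigenvalue: the largest real eigenvalue (for positive matrices this is the
  spectral radius, by Perron's theorem).\<close>
definition perron_eigenvalue :: "real^'n^'n \<Rightarrow> real" where
  "perron_eigenvalue A = Sup {l. \<exists>v. v \<noteq> 0 \<and> A *v v = l *\<^sub>R v}"

definition eigenvector_method :: "real^'n^'n \<Rightarrow> real^'n" where
  "eigenvector_method A =
     (THE w. (\<forall>i. w $ i > 0) \<and> (\<Sum>i\<in>UNIV. w $ i) = 1 \<and> A *v w = perron_eigenvalue A *\<^sub>R w)"

definition flat_method :: "real^'n^'n \<Rightarrow> real^'n" where
  "flat_method A = (\<chi> i. 1 / real CARD('n))"

end

theory Submission
  imports Defs
begin

text \<open>A positive matrix has a positive eigenvector, by Brouwer's fixed point theorem applied to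
  the normalised map x \<mapsto> Ax / \<Sigma>(Ax) on the simplex. Comparing any eigenvector with it
  componentwise shows that its eigenvalue is the largest real one and that it is the only
  normalised eigenvector for that eigenvalue, so the Eigenvector Method is a weighting method.
  Every column of a consistent matrix is an eigenvector for n, which gives correctness.
  The Eigenvector Method assigns the uniform vector to the all-ones matrix; an
  \<alpha>-transformation with \<alpha> \<noteq> 1 on a triad changes the row sum of a triad row but not that of a
  fourth row, so the uniform vector is no longer an eigenvector. The flat method ignores its
  argument, hence is invariant, but cannot reproduce a consistent matrix with an entry \<noteq> 1.\<close>

lemma matrix_vector_mult_component: "(A *v x) $ i = (\<Sum>j\<in>UNIV. A$i$j * x$j)"
  by (simp add: matrix_vector_mult_def)

lemma ex_four_distinct:
  assumes "CARD('a) \<ge> 4"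
  obtains i j k l :: "'a::finite" where "distinct [i, j, k, l]"
proof -
  obtain xs :: "'a list" where xs: "distinct xs" "set xs = UNIV"
    using finite_distinct_list[OF finite_class.finite_UNIV] by blast
  have "length xs \<ge> 4" using assms xs distinct_card by fastforce
  then have "distinct [xs!0, xs!1, xs!2, xs!3]"
    using xs(1) by (auto dest!: nth_eq_iff_index_eq[THEN iffD1, rotated -1])
  then show ?thesis by (rule that)
qed

lemma abs_eigenvalue_le_positive_eigenvalue:
  fixes A :: "real^'n^'n"
  assumes A: "\<forall>i j. A$i$j \<ge> 0" and w: "\<forall>i. w$i > 0" and Aw: "A *v w = r *\<^sub>R w"
    and v: "v \<noteq> 0" and Av: "A *v v = l *\<^sub>R v"
  shows "\<bar>l\<bar> \<le> r"
proof -
  define t where "t = Max ((\<lambda>i. \<bar>v$i\<bar> / w$i) ` UNIV)"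
  obtain i0 where i0: "t = \<bar>v$i0\<bar> / w$i0"
    using Max_in[of "(\<lambda>i. \<bar>v$i\<bar> / w$i) ` UNIV"] t_def by fastforce
  have t_ge: "\<bar>v$j\<bar> / w$j \<le> t" for j unfolding t_def by (rule Max_ge) auto
  have v_le: "\<bar>v$j\<bar> \<le> t * w$j" for j using t_ge[of j] w by (simp add: pos_divide_le_eq)
  obtain j where "v$j \<noteq> 0" using v by (metis vec_eq_iff zero_index)
  then have "t > 0" using t_ge[of j] w by (smt (verit) divide_pos_pos zero_less_abs_iff)
  then have pos: "t * w$i0 > 0" using w by simp
  have v_i0: "\<bar>v$i0\<bar> = t * w$i0" using i0 w[rule_format, of i0] by (simp add: field_simps)
  have "\<bar>l\<bar> * (t * w$i0) = \<bar>(A *v v)$i0\<bar>" using Av v_i0 by (simp add: abs_mult)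
  also have "\<dots> \<le> (\<Sum>j\<in>UNIV. A$i0$j * \<bar>v$j\<bar>)"
    unfolding matrix_vector_mult_component
    by (rule order_trans[OF sum_abs]) (use A in \<open>simp add: abs_mult\<close>)
  also have "\<dots> \<le> (\<Sum>j\<in>UNIV. A$i0$j * (t * w$j))"
    by (rule sum_mono) (use A v_le in \<open>simp add: mult_left_mono\<close>)
  also have "\<dots> = t * (A *v w)$i0"
    by (simp add: matrix_vector_mult_component sum_distrib_left algebra_simps)
  also have "\<dots> = r * (t * w$i0)" using Aw by simp
  finally show ?thesis using pos by (rule mult_right_le_imp_le)
qed

text \<open>Subtracting the largest multiple of w that keeps w' - t w nonnegative leaves an
  eigenvector with a zero entry, which positivity of A forces to vanish altogether.\<close>

lemma normalised_positive_eigenvector_unique: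
  fixes A :: "real^'n^'n"
  assumes A: "\<forall>i j. A$i$j > 0" and w: "\<forall>i. w$i > 0" and Aw: "A *v w = r *\<^sub>R w"
    and Aw': "A *v w' = r *\<^sub>R w'"
    and sum_w: "(\<Sum>i\<in>UNIV. w$i) = 1" and sum_w': "(\<Sum>i\<in>UNIV. w'$i) = 1"
  shows "w' = w"
proof -
  define t where "t = Min ((\<lambda>i. w'$i / w$i) ` UNIV)"
  obtain i0 where i0: "t = w'$i0 / w$i0"
    using Min_in[of "(\<lambda>i. w'$i / w$i) ` UNIV"] t_def by fastforce
  have t_le: "t \<le> w'$j / w$j" for j unfolding t_def by (rule Min_le) auto
  define z where "z = w' - t *\<^sub>R w"
  have z_nonneg: "z$j \<ge> 0" for j using t_le[of j] w by (simp add: z_def pos_le_divide_eq)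
  have "z$i0 = 0" using i0 w[rule_format, of i0] by (simp add: z_def field_simps)
  moreover have "A *v z = r *\<^sub>R z"
    by (simp add: z_def Aw Aw' matrix_vector_mult_diff_distrib matrix_vector_mult_scaleR algebra_simps)
  ultimately have "(A *v z)$i0 = 0" by simp
  then have "(\<Sum>j\<in>UNIV. A$i0$j * z$j) = 0" by (simp only: matrix_vector_mult_component)
  moreover have "0 \<le> A$i0$j * z$j" for j using A z_nonneg[of j] by (simp add: less_imp_le)
  ultimately have "A$i0$j * z$j = 0" for j
    using sum_nonneg_eq_0_iff[of UNIV "\<lambda>j. A$i0$j * z$j"] by simp
  then have "z = 0" using A by (metis less_irrefl mult_eq_0_iff vec_eq_iff zero_index)
  then have w'_eq: "w' = t *\<^sub>R w" by (simp add: z_def)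
  then have "t = 1" using sum_w sum_w' by (simp add: sum_distrib_left[symmetric])
  then show ?thesis using w'_eq by simp
qed

lemma
  fixes A :: "real^'n^'n"
  assumes A: "\<forall>i j. A$i$j > 0" and w: "\<forall>i. w$i > 0" and Aw: "A *v w = r *\<^sub>R w"
    and sum_w: "(\<Sum>i\<in>UNIV. w$i) = 1"
  shows perron_eigenvalue_eqI: "perron_eigenvalue A = r"
    and eigenvector_method_eqI: "eigenvector_method A = w"
proof -
  have "w \<noteq> 0" using w by (metis less_irrefl zero_index)
  show r: "perron_eigenvalue A = r" unfolding perron_eigenvalue_def
  proof (rule cSup_eq_maximum)
    show "r \<in> {l. \<exists>v. v \<noteq> 0 \<and> A *v v = l *\<^sub>R v}" using \<open>w \<noteq> 0\<close> Aw by blast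
    show "l \<le> r" if "l \<in> {l. \<exists>v. v \<noteq> 0 \<and> A *v v = l *\<^sub>R v}" for l
      using that abs_eigenvalue_le_positive_eigenvalue[OF _ w Aw] A
      by (fastforce simp: less_imp_le)
  qed
  show "eigenvector_method A = w" unfolding eigenvector_method_def r
  proof (rule the_equality)
    show "(\<forall>i. w $ i > 0) \<and> (\<Sum>i\<in>UNIV. w $ i) = 1 \<and> A *v w = r *\<^sub>R w"
      using w Aw sum_w by blast
    show "w' = w" if "(\<forall>i. w' $ i > 0) \<and> (\<Sum>i\<in>UNIV. w' $ i) = 1 \<and> A *v w' = r *\<^sub>R w'"
      for w'
      using that normalised_positive_eigenvector_unique[OF A w Aw _ sum_w] by blast
  qed
qed

lemma positive_matrix_mult_simplex_positive:
  fixes A :: "real^'n^'n"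
  assumes A: "\<forall>i j. A$i$j > 0" and x: "\<forall>j. x$j \<ge> 0" "(\<Sum>j\<in>UNIV. x$j) = 1"
  shows "(A *v x)$i > 0"
proof -
  have "\<exists>j. x$j > 0"
  proof (rule ccontr)
    assume "\<nexists>j. x$j > 0"
    then have "(\<Sum>j\<in>UNIV. x$j) \<le> 0" by (simp add: sum_nonpos not_less)
    with x(2) show False by simp
  qed
  then obtain j where j: "x$j > 0" ..
  have "0 < A$i$j * x$j" using A j by simp
  also have "\<dots> \<le> (\<Sum>k\<in>UNIV. A$i$k * x$k)"
    by (rule member_le_sum) (use A x in \<open>auto intro: mult_nonneg_nonneg less_imp_le\<close>)
  finally show ?thesis by (simp add: matrix_vector_mult_component)
qed

lemma positive_matrix_has_positive_eigenvector:
  fixes A :: "real^'n^'n"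
  assumes A: "\<forall>i j. A$i$j > 0"
  obtains w r where "\<forall>i. w$i > 0" "(\<Sum>i\<in>UNIV. w$i) = 1" "A *v w = r *\<^sub>R w"
proof -
  define S where "S = {x::real^'n. (\<forall>i. 0 \<le> x$i) \<and> (\<Sum>i\<in>UNIV. x$i) = 1}"
  define g where "g x = (\<Sum>i\<in>UNIV. (A *v x)$i)" for x
  define f where "f x = (1 / g x) *\<^sub>R (A *v x)" for x
  have Ax_pos: "(A *v x)$i > 0" if "x \<in> S" for x i
    using positive_matrix_mult_simplex_positive[OF A] that by (simp add: S_def)
  have g_pos: "g x > 0" if "x \<in> S" for x
    unfolding g_def by (rule sum_pos) (use Ax_pos that in auto)
  have "closed S" unfolding S_def
    by (intro closed_Collect_conj closed_Collect_all closed_Collect_le closed_Collect_eq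
        continuous_on_const continuous_on_component continuous_on_id continuous_on_sum)
  moreover have "bounded S" unfolding bounded_iff
  proof (intro exI ballI)
    fix x assume "x \<in> S"
    then show "norm x \<le> 1" using norm_le_l1_cart[of x] by (simp add: S_def)
  qed
  ultimately have "compact S" by (simp add: compact_eq_bounded_closed)
  moreover have "convex S" unfolding convex_def S_def
    by (auto simp: sum.distrib sum_distrib_left[symmetric])
  moreover have "(\<chi> i. 1 / real CARD('n)) \<in> S" by (simp add: S_def)
  moreover have "continuous_on S f" unfolding f_def g_def
    by (intro continuous_intros) (use g_pos in \<open>fastforce simp: g_def\<close>)
  moreover have "f \<in> S \<rightarrow> S"
  proof
    fix x assume x: "x \<in> S"
    have "\<forall>i. 0 \<le> f x $ i" using Ax_pos[OF x] g_pos[OF x] by (simp add: f_def less_imp_le)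
    moreover have "(\<Sum>i\<in>UNIV. f x $ i) = 1" using g_pos[OF x]
      by (simp add: f_def g_def sum_divide_distrib[symmetric])
    ultimately show "f x \<in> S" by (simp add: S_def)
  qed
  ultimately obtain x where x: "x \<in> S" and fx: "f x = x"
    using brouwer[of S f] by blast
  have "A *v x = g x *\<^sub>R f x" using g_pos[OF x] by (simp add: f_def)
  then have "A *v x = g x *\<^sub>R x" using fx by simp
  moreover have "x$i > 0" for i
  proof -
    have "x$i = f x $ i" using fx by simp
    also have "\<dots> = (A *v x)$i / g x" by (simp add: f_def)
    finally have "x$i = (A *v x)$i / g x" .
    then show ?thesis using Ax_pos[OF x] g_pos[OF x] by simp
  qed
  ultimately show ?thesis using x that by (auto simp: S_def)
qed

lemma eigenvector_method_positive_matrix: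
  fixes A :: "real^'n^'n"
  assumes "\<forall>i j. A$i$j > 0"
  shows "\<forall>i. eigenvector_method A $ i > 0" "(\<Sum>i\<in>UNIV. eigenvector_method A $ i) = 1"
    and "A *v eigenvector_method A = perron_eigenvalue A *\<^sub>R eigenvector_method A"
proof -
  obtain w r where w: "\<forall>i. w$i > 0" "(\<Sum>i\<in>UNIV. w$i) = 1" "A *v w = r *\<^sub>R w"
    using positive_matrix_has_positive_eigenvector[OF assms] .
  then show "\<forall>i. eigenvector_method A $ i > 0" "(\<Sum>i\<in>UNIV. eigenvector_method A $ i) = 1"
    and "A *v eigenvector_method A = perron_eigenvalue A *\<^sub>R eigenvector_method A"
    using perron_eigenvalue_eqI[OF assms w(1,3,2)] eigenvector_method_eqI[OF assms w(1,3,2)]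
    by simp_all
qed

lemma pcm_positive: "pcm A \<Longrightarrow> \<forall>i j. A$i$j > 0"
  unfolding pcm_def by blast

lemma consistent_column_eigenvector:
  fixes A :: "real^'n^'n"
  assumes "consistent A"
  shows "A *v column k A = real CARD('n) *\<^sub>R column k A"
proof -
  have "A$p$q * A$q$k = A$p$k" for p q using assms by (simp add: consistent_def)
  then show ?thesis by (simp add: vec_eq_iff matrix_vector_mult_component column_def)
qed

lemma weighting_method_eigenvector_method:
  "weighting_method (eigenvector_method :: real^'n^'n \<Rightarrow> real^'n)"
  using eigenvector_method_positive_matrix pcm_positive
  unfolding weighting_method_def by blast

lemma correctness_eigenvector_method:
  "correctness (eigenvector_method :: real^'n^'n \<Rightarrow> real^'n)"
  unfolding correctness_def
proof (intro allI impI)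
  fix A :: "real^'n^'n" and i j
  assume "pcm A \<and> consistent A"
  then have A: "\<forall>i j. A$i$j > 0" and "consistent A" using pcm_positive by blast+
  fix k :: 'n
  define S where "S = (\<Sum>q\<in>UNIV. A$q$k)"
  have "S > 0" unfolding S_def by (rule sum_pos) (use A in auto)
  define w where "w = (1 / S) *\<^sub>R column k A"
  have "\<forall>p. w$p > 0" using A \<open>S > 0\<close> by (simp add: w_def column_def)
  moreover have "(\<Sum>p\<in>UNIV. w$p) = 1"
    using \<open>S > 0\<close> by (simp add: w_def S_def column_def sum_divide_distrib[symmetric])
  moreover have "A *v w = real CARD('n) *\<^sub>R w"
    using consistent_column_eigenvector[OF \<open>consistent A\<close>]
    by (simp add: w_def matrix_vector_mult_scaleR)
  ultimately have "eigenvector_method A = w" using eigenvector_method_eqI[OF A] by blast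
  moreover have "A$i$k = A$i$j * A$j$k" using \<open>consistent A\<close> by (simp add: consistent_def)
  then have "A$i$k / A$j$k = A$i$j" using A by (simp add: less_imp_neq[symmetric])
  ultimately show "eigenvector_method A $ i / eigenvector_method A $ j = A$i$j"
    using \<open>S > 0\<close> by (simp add: w_def column_def)
qed

lemma eigenvalue_eq_row_sum_of_constant_eigenvector:
  fixes A :: "real^'n^'n"
  assumes "A *v (\<chi> _. c) = r *\<^sub>R (\<chi> _. c)" and "c \<noteq> 0"
  shows "(\<Sum>q\<in>UNIV. A$p$q) = r"
proof -
  have "(\<Sum>q\<in>UNIV. A$p$q) * c = r * c"
    using arg_cong[OF assms(1), of "\<lambda>v. v $ p"]
    by (simp add: matrix_vector_mult_component sum_distrib_right)
  then show ?thesis using assms(2) by simp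
qed

lemma row_sum_alpha_transform_ones:
  fixes i j k :: "'n::finite"
  assumes "distinct [i, j, k]"
  shows "(\<Sum>q\<in>UNIV. alpha_transform \<alpha> i j k (\<chi> p q. 1) $ i $ q)
           = real CARD('n) - 2 + \<alpha> + 1 / \<alpha>"
    and "l \<notin> {i, j, k} \<Longrightarrow> (\<Sum>q\<in>UNIV. alpha_transform \<alpha> i j k (\<chi> p q. 1) $ l $ q)
           = real CARD('n)"
proof -
  have "alpha_transform \<alpha> i j k (\<chi> p q. 1) $ i $ q
          = 1 + (if q = j then \<alpha> - 1 else 0) + (if q = k then 1 / \<alpha> - 1 else 0)" for q
    using assms by (auto simp: alpha_transform_def)
  then show "(\<Sum>q\<in>UNIV. alpha_transform \<alpha> i j k (\<chi> p q. 1) $ i $ q)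
               = real CARD('n) - 2 + \<alpha> + 1 / \<alpha>"
    by (simp add: sum.distrib)
  show "(\<Sum>q\<in>UNIV. alpha_transform \<alpha> i j k (\<chi> p q. 1) $ l $ q) = real CARD('n)"
    if "l \<notin> {i, j, k}" using that by (simp add: alpha_transform_def)
qed

lemma not_invariant_alpha_triad_eigenvector_method:
  assumes "CARD('n::finite) \<ge> 4"
  shows "\<not> invariant_alpha_triad (eigenvector_method :: real^'n^'n \<Rightarrow> real^'n)"
proof
  assume inv: "invariant_alpha_triad (eigenvector_method :: real^'n^'n \<Rightarrow> real^'n)"
  obtain i j k l :: 'n where ijkl: "distinct [i, j, k, l]"
    using ex_four_distinct assms by blast
  define n where "n = real CARD('n)"
  define A :: "real^'n^'n" where "A = (\<chi> p q. 1)"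
  define B where "B = alpha_transform 2 i j k A"
  have "n > 0" by (simp add: n_def)
  have "pcm A" by (simp add: pcm_def A_def)
  have "eigenvector_method A = (\<chi> _. 1 / n)"
    using \<open>n > 0\<close> by (intro eigenvector_method_eqI[where r = n])
      (auto simp: A_def n_def vec_eq_iff matrix_vector_mult_component)
  moreover have "eigenvector_method A = eigenvector_method B"
    using inv \<open>pcm A\<close> ijkl unfolding invariant_alpha_triad_def B_def by simp
  moreover have "\<forall>p q. B$p$q > 0" by (simp add: B_def alpha_transform_def A_def)
  ultimately have "B *v (\<chi> _. 1 / n) = perron_eigenvalue B *\<^sub>R (\<chi> _. 1 / n)"
    using eigenvector_method_positive_matrix(3)[of B] by simp
  then have "(\<Sum>q\<in>UNIV. B$p$q) = perron_eigenvalue B" for p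
    by (rule eigenvalue_eq_row_sum_of_constant_eigenvector) (use \<open>n > 0\<close> in simp)
  then have "(\<Sum>q\<in>UNIV. B$i$q) = (\<Sum>q\<in>UNIV. B$l$q)" by simp
  moreover have "(\<Sum>q\<in>UNIV. B$i$q) = n - 2 + 2 + 1 / 2" unfolding B_def A_def n_def
    by (rule row_sum_alpha_transform_ones(1)) (use ijkl in simp)
  moreover have "(\<Sum>q\<in>UNIV. B$l$q) = n" unfolding B_def A_def n_def
    by (rule row_sum_alpha_transform_ones(2)) (use ijkl in auto)
  ultimately show False by simp
qed

lemma consistent_pcm_of_weights:
  fixes c :: "'n::finite \<Rightarrow> real"
  assumes "\<forall>p. c p > 0"
  shows "pcm (\<chi> p q. c p / c q)" "consistent (\<chi> p q. c p / c q)"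
  using assms by (auto simp: pcm_def consistent_def less_imp_neq[symmetric])

lemma weighting_method_flat_method:
  "weighting_method (flat_method :: real^'n^'n \<Rightarrow> real^'n)"
  by (simp add: weighting_method_def flat_method_def)

lemma invariant_alpha_triad_flat_method:
  "invariant_alpha_triad (flat_method :: real^'n^'n \<Rightarrow> real^'n)"
  by (simp add: invariant_alpha_triad_def flat_method_def)

lemma not_correctness_flat_method:
  assumes "CARD('n::finite) \<ge> 2"
  shows "\<not> correctness (flat_method :: real^'n^'n \<Rightarrow> real^'n)"
proof
  assume "correctness (flat_method :: real^'n^'n \<Rightarrow> real^'n)"
  fix i :: 'n
  have "UNIV \<noteq> {i}"
  proof
    assume "UNIV = {i}"
    then have "CARD('n) = 1" using card_1_singleton_iff by fastforce
    with assms show False by simp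
  qed
  then obtain j where "j \<noteq> i" by (auto simp: set_eq_iff)
  define c :: "'n \<Rightarrow> real" where "c p = (if p = i then 2 else 1)" for p
  have "\<forall>p. c p > 0" by (simp add: c_def)
  then have "flat_method (\<chi> p q. c p / c q) $ i / flat_method (\<chi> p q. c p / c q) $ j
               = (\<chi> p q. c p / c q) $ i $ j"
    using \<open>correctness flat_method\<close> consistent_pcm_of_weights unfolding correctness_def by blast
  then show False using \<open>j \<noteq> i\<close> by (simp add: flat_method_def c_def)
qed

theorem proposition4p1:
  assumes "CARD('n::finite) \<ge> 4"
  shows "weighting_method (eigenvector_method :: real^'n^'n \<Rightarrow> real^'n)
           \<and> correctness (eigenvector_method :: real^'n^'n \<Rightarrow> real^'n)
           \<and> \<not> invariant_alpha_triad (eigenvector_method :: real^'n^'n \<Rightarrow> real^'n)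
         \<and> weighting_method (flat_method :: real^'n^'n \<Rightarrow> real^'n)
           \<and> invariant_alpha_triad (flat_method :: real^'n^'n \<Rightarrow> real^'n)
           \<and> \<not> correctness (flat_method :: real^'n^'n \<Rightarrow> real^'n)"
proof -
  have "CARD('n) \<ge> 2" using assms by simp
  then show ?thesis
    using weighting_method_eigenvector_method correctness_eigenvector_method
      not_invariant_alpha_triad_eigenvector_method[OF assms]
      weighting_method_flat_method invariant_alpha_triad_flat_method
      not_correctness_flat_method
    by blast
qed

end
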